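(* Let $(\mathbf{F},\Delta)$ be a poset comonoid and $(\mathbf{F},\Box)$ a poset monoid on the same poset species which form an adjoint pair with $\Delta\dashv\Box$. Let $I$ be a finite set and $x\in\mathbf{F}[I]$. The inverted basis element $\omega_x=\sum_{x\le y}\mu(x,y)\,y\in\mathbf{k}\mathbf{F}[I]$ is primitive if and only if $x$ is indecomposable in the monoid $(\mathbf{F},\Box)$. Moreover, the set $\{\omega_x: x\in\mathbf{F}[I],\ x\ \text{is }\Box\text{-indecomposable}\}$ is a basis of the space $\mathcal{P}(\mathbf{k}\mathbf{F})[I]$ of primitive elements of $\mathbf{k}\mathbf{F}[I]$.
   Context: $\mathbf{k}$ is a field of characteristic $0$. A (connected) poset species $\mathbf{F}$ assigns to each finite set $I$ a locally finite poset $\mathbf{F}[I]$, with $\mathbf{F}[\emptyset]$ a singleton $\{1\}$, and to each bijection an order-preserving bijection, functorially. A poset monoid $(\mathbf{F},\Box)$: order-preserving maps $\Box_{S,T}:\mathbf{F}[S]\times\mathbf{F}[T]\to\mathbf{F}[S\sqcup T]$, natural, associative, unital with unit $1$. A poset comonoid $(\mathbf{F},\Delta)$: order-preserving maps $\Delta_{S,T}:\mathbf{F}[S\sqcup T]\to\mathbf{F}[S]\times\mathbf{F}[T]$, natural, coassociative, counital. Adjoint pair $\Delta\dashv\Box$: $\Delta_{S,T}(x)\le(y,z)\iff x\le\Box_{S,T}(y,z)$ for all $x,y,z$ (product order). $\mathbf{k}\mathbf{F}[I]$ is the vector space with basis $\mathbf{F}[I]$, and $\Delta_{S,T}$ extends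 linearly to $\mathbf{k}\mathbf{F}[S\sqcup T]\to\mathbf{k}\mathbf{F}[S]\otimes\mathbf{k}\mathbf{F}[T]$. $\mu$ is the Möbius function of $\mathbf{F}[I]$. An element $x\in\mathbf{F}[I]$ is $\Box$-indecomposable if there is no decomposition $I=S\sqcup T$ with $S,T$ nonempty and $y\in\mathbf{F}[S]$, $z\in\mathbf{F}[T]$ such that $x=\Box_{S,T}(y,z)$. An element $p\in\mathbf{k}\mathbf{F}[I]$ is primitive if $\Delta_{S,T}(p)=0$ for all decompositions $I=S\sqcup T$ with $S,T$ nonempty. *)

theory Defs
  imports Complex_Main "HOL-Library.Function_Algebras"
begin

(* Encoding of a poset species F on finite sets of labels of type 'l:
   Fc I       : the underlying set F[I]  (elements of a common type 'x)
   Fle I      : the partial order on F[I]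
   Fact s I   : F[s] : F[I] -> F[s ` I] for a bijection s from I onto s ` I
   e          : the unique element 1 of F[{}] *)

definition poset_species ::
  "('l set \<Rightarrow> 'x set) \<Rightarrow> ('l set \<Rightarrow> 'x \<Rightarrow> 'x \<Rightarrow> bool)
   \<Rightarrow> (('l \<Rightarrow> 'l) \<Rightarrow> 'l set \<Rightarrow> 'x \<Rightarrow> 'x) \<Rightarrow> 'x \<Rightarrow> bool" where
  "poset_species Fc Fle Fact e \<longleftrightarrow>
     (\<forall>I. finite I \<longrightarrow>
        (\<forall>x\<in>Fc I. Fle I x x) \<and>
        (\<forall>x\<in>Fc I. \<forall>y\<in>Fc I. Fle I x y \<longrightarrow> Fle I y x \<longrightarrow> x = y) \<and>
        (\<forall>x\<in>Fc I. \<forall>y\<in>Fc I. \<forall>z\<in>Fc I. Fle I x y \<longrightarrow> Fle I y z \<longrightarrow> Fle I x z) \<and>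
        (\<forall>x\<in>Fc I. \<forall>y\<in>Fc I. finite {z\<in>Fc I. Fle I x z \<and> Fle I z y})) \<and>
     Fc {} = {e} \<and>
     (\<forall>I s. finite I \<longrightarrow> inj_on s I \<longrightarrow>
        (\<forall>x\<in>Fc I. Fact s I x \<in> Fc (s ` I)) \<and>
        (\<forall>x\<in>Fc I. \<forall>y\<in>Fc I. Fle I x y \<longrightarrow> Fle (s ` I) (Fact s I x) (Fact s I y))) \<and>
     (\<forall>I s t. finite I \<longrightarrow> (\<forall>i\<in>I. s i = t i) \<longrightarrow> (\<forall>x\<in>Fc I. Fact s I x = Fact t I x)) \<and>
     (\<forall>I. finite I \<longrightarrow> (\<forall>x\<in>Fc I. Fact id I x = x)) \<and>
     (\<forall>I s t. finite I \<longrightarrow> inj_on s I \<longrightarrow> inj_on t (s ` I) \<longrightarrow>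
        (\<forall>x\<in>Fc I. Fact (t \<circ> s) I x = Fact t (s ` I) (Fact s I x)))"

definition poset_monoid ::
  "('l set \<Rightarrow> 'x set) \<Rightarrow> ('l set \<Rightarrow> 'x \<Rightarrow> 'x \<Rightarrow> bool)
   \<Rightarrow> (('l \<Rightarrow> 'l) \<Rightarrow> 'l set \<Rightarrow> 'x \<Rightarrow> 'x) \<Rightarrow> 'x
   \<Rightarrow> ('l set \<Rightarrow> 'l set \<Rightarrow> 'x \<Rightarrow> 'x \<Rightarrow> 'x) \<Rightarrow> bool" where
  "poset_monoid Fc Fle Fact e mul \<longleftrightarrow>
     poset_species Fc Fle Fact e \<and>
     (\<forall>S T. finite S \<longrightarrow> finite T \<longrightarrow> S \<inter> T = {} \<longrightarrow>
        (\<forall>y\<in>Fc S. \<forall>z\<in>Fc T. mul S T y z \<in> Fc (S \<union> T)) \<and>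
        (\<forall>y\<in>Fc S. \<forall>z\<in>Fc T. \<forall>y'\<in>Fc S. \<forall>z'\<in>Fc T.
            Fle S y y' \<longrightarrow> Fle T z z' \<longrightarrow> Fle (S \<union> T) (mul S T y z) (mul S T y' z')) \<and>
        (\<forall>s. inj_on s (S \<union> T) \<longrightarrow> (\<forall>y\<in>Fc S. \<forall>z\<in>Fc T.
            Fact s (S \<union> T) (mul S T y z) = mul (s ` S) (s ` T) (Fact s S y) (Fact s T z))) \<and>
        (\<forall>y\<in>Fc S. mul S {} y e = y) \<and>
        (\<forall>z\<in>Fc T. mul {} T e z = z)) \<and>
     (\<forall>R S T. finite R \<longrightarrow> finite S \<longrightarrow> finite T \<longrightarrow>
        R \<inter> S = {} \<longrightarrow> R \<inter> T = {} \<longrightarrow> S \<inter> T = {} \<longrightarrow>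
        (\<forall>x\<in>Fc R. \<forall>y\<in>Fc S. \<forall>z\<in>Fc T.
           mul (R \<union> S) T (mul R S x y) z = mul R (S \<union> T) x (mul S T y z)))"

definition poset_comonoid ::
  "('l set \<Rightarrow> 'x set) \<Rightarrow> ('l set \<Rightarrow> 'x \<Rightarrow> 'x \<Rightarrow> bool)
   \<Rightarrow> (('l \<Rightarrow> 'l) \<Rightarrow> 'l set \<Rightarrow> 'x \<Rightarrow> 'x) \<Rightarrow> 'x
   \<Rightarrow> ('l set \<Rightarrow> 'l set \<Rightarrow> 'x \<Rightarrow> 'x \<times> 'x) \<Rightarrow> bool" where
  "poset_comonoid Fc Fle Fact e comul \<longleftrightarrow>
     poset_species Fc Fle Fact e \<and>
     (\<forall>S T. finite S \<longrightarrow> finite T \<longrightarrow> S \<inter> T = {} \<longrightarrow>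
        (\<forall>x\<in>Fc (S \<union> T). fst (comul S T x) \<in> Fc S \<and> snd (comul S T x) \<in> Fc T) \<and>
        (\<forall>x\<in>Fc (S \<union> T). \<forall>x'\<in>Fc (S \<union> T). Fle (S \<union> T) x x' \<longrightarrow>
            Fle S (fst (comul S T x)) (fst (comul S T x')) \<and>
            Fle T (snd (comul S T x)) (snd (comul S T x'))) \<and>
        (\<forall>s. inj_on s (S \<union> T) \<longrightarrow> (\<forall>x\<in>Fc (S \<union> T).
            comul (s ` S) (s ` T) (Fact s (S \<union> T) x) =
              map_prod (Fact s S) (Fact s T) (comul S T x))) \<and>
        (\<forall>x\<in>Fc S. comul S {} x = (x, e)) \<and>
        (\<forall>x\<in>Fc T. comul {} T x = (e, x))) \<and>
     (\<forall>R S T. finite R \<longrightarrow> finite S \<longrightarrow> finite T \<longrightarrow>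
        R \<inter> S = {} \<longrightarrow> R \<inter> T = {} \<longrightarrow> S \<inter> T = {} \<longrightarrow>
        (\<forall>x\<in>Fc (R \<union> S \<union> T).
           map_prod (comul R S) id (comul (R \<union> S) T x) =
           (let (a, b) = comul R (S \<union> T) x; (c, d) = comul S T b in ((a, c), d))))"

definition adjoint_pair ::
  "('l set \<Rightarrow> 'x set) \<Rightarrow> ('l set \<Rightarrow> 'x \<Rightarrow> 'x \<Rightarrow> bool)
   \<Rightarrow> ('l set \<Rightarrow> 'l set \<Rightarrow> 'x \<Rightarrow> 'x \<times> 'x)
   \<Rightarrow> ('l set \<Rightarrow> 'l set \<Rightarrow> 'x \<Rightarrow> 'x \<Rightarrow> 'x) \<Rightarrow> bool" where
  "adjoint_pair Fc Fle comul mul \<longleftrightarrow>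
     (\<forall>S T. finite S \<longrightarrow> finite T \<longrightarrow> S \<inter> T = {} \<longrightarrow>
        (\<forall>x\<in>Fc (S \<union> T). \<forall>y\<in>Fc S. \<forall>z\<in>Fc T.
           (Fle S (fst (comul S T x)) y \<and> Fle T (snd (comul S T x)) z)
             \<longleftrightarrow> Fle (S \<union> T) x (mul S T y z)))"

definition mobius :: "('x \<Rightarrow> 'x \<Rightarrow> bool) \<Rightarrow> 'x set \<Rightarrow> 'x \<Rightarrow> 'x \<Rightarrow> 'k::ring_1" where
  "mobius le C = (THE f. \<forall>a b. f a b =
      (if a \<in> C \<and> b \<in> C \<and> le a b then
         (if a = b then 1 else - (\<Sum>z\<in>{z\<in>C. le a z \<and> le z b \<and> z \<noteq> b}. f a z))
       else 0))"

text \<open>The vector space kF[I]: finitely supported k-valued functions on F[I]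
  (the coefficient vectors w.r.t. the basis F[I]).\<close>
definition kF :: "('l set \<Rightarrow> 'x set) \<Rightarrow> 'l set \<Rightarrow> ('x \<Rightarrow> 'k::zero) set" where
  "kF Fc I = {p. finite {x. p x \<noteq> 0} \<and> {x. p x \<noteq> 0} \<subseteq> Fc I}"

text \<open>Linear extension of comul S T to kF[S \<union> T] -> kF[S] \<otimes> kF[T], the tensor product being
  represented by coefficient functions on F[S] x F[T] (basis y \<otimes> z).\<close>
definition comul_lin ::
  "('l set \<Rightarrow> 'l set \<Rightarrow> 'x \<Rightarrow> 'x \<times> 'x) \<Rightarrow> 'l set \<Rightarrow> 'l set \<Rightarrow> ('x \<Rightarrow> 'k::comm_monoid_add)
   \<Rightarrow> ('x \<times> 'x \<Rightarrow> 'k)" where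
  "comul_lin comul S T p = (\<lambda>yz. \<Sum>x\<in>{x. p x \<noteq> 0 \<and> comul S T x = yz}. p x)"

definition primitive ::
  "('l set \<Rightarrow> 'x set) \<Rightarrow> ('l set \<Rightarrow> 'l set \<Rightarrow> 'x \<Rightarrow> 'x \<times> 'x) \<Rightarrow> 'l set
   \<Rightarrow> ('x \<Rightarrow> 'k::comm_monoid_add) \<Rightarrow> bool" where
  "primitive Fc comul I p \<longleftrightarrow> p \<in> kF Fc I \<and>
     (\<forall>S T. S \<noteq> {} \<longrightarrow> T \<noteq> {} \<longrightarrow> S \<inter> T = {} \<longrightarrow> S \<union> T = I \<longrightarrow>
        comul_lin comul S T p = (\<lambda>_. 0))"

definition box_indecomposable ::
  "('l set \<Rightarrow> 'x set) \<Rightarrow> ('l set \<Rightarrow> 'l set \<Rightarrow> 'x \<Rightarrow> 'x \<Rightarrow> 'x) \<Rightarrow> 'l set \<Rightarrow> 'x \<Rightarrow> bool" where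
  "box_indecomposable Fc mul I x \<longleftrightarrow>
     \<not> (\<exists>S T y z. S \<noteq> {} \<and> T \<noteq> {} \<and> S \<inter> T = {} \<and> S \<union> T = I \<and>
           y \<in> Fc S \<and> z \<in> Fc T \<and> x = mul S T y z)"

definition omega ::
  "('l set \<Rightarrow> 'x set) \<Rightarrow> ('l set \<Rightarrow> 'x \<Rightarrow> 'x \<Rightarrow> bool) \<Rightarrow> 'l set \<Rightarrow> 'x \<Rightarrow> ('x \<Rightarrow> 'k::ring_1)" where
  "omega Fc Fle I x = (\<lambda>y. if y \<in> Fc I \<and> Fle I x y then mobius (Fle I) (Fc I) x y else 0)"

definition fscale :: "'k::times \<Rightarrow> ('x \<Rightarrow> 'k) \<Rightarrow> ('x \<Rightarrow> 'k)" where
  "fscale c p = (\<lambda>y. c * p y)"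

end

theory Submission
  imports Defs
begin

(* For v in F[I] let psi_v p be the sum of the coefficients of p at the elements below v.
   The recursion defining the Moebius function says exactly that psi_v omega_x is 1 if x = v
   and 0 otherwise, so (the up-sets being finite) the omega_x form a basis of kF[I] dual to
   the functionals psi_v.  By adjointness, the coefficient sum of Delta_{S,T} p below (a, b)
   is psi_{a [] b} p, and a finitely supported function on a poset vanishes as soon as all its
   coefficient sums below points vanish (look at a minimal point of its support).  Hence p is
   primitive iff psi_v p = 0 for every decomposable v; in the omega-basis these numbers are
   precisely the coordinates of p at the decomposable elements. *)

locale locally_finite_poset =
  fixes le :: "'x \<Rightarrow> 'x \<Rightarrow> bool" and C :: "'x set"
  assumes reflexive: "x \<in> C \<Longrightarrow> le x x"
    and antisymmetric: "x \<in> C \<Longrightarrow> y \<in> C \<Longrightarrow> le x y \<Longrightarrow> le y x \<Longrightarrow> x = y"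
    and transitive: "x \<in> C \<Longrightarrow> y \<in> C \<Longrightarrow> z \<in> C \<Longrightarrow> le x y \<Longrightarrow> le y z \<Longrightarrow> le x z"
    and finite_interval: "x \<in> C \<Longrightarrow> y \<in> C \<Longrightarrow> finite {z\<in>C. le x z \<and> le z y}"
begin

text \<open>Intervals with an endpoint outside \<open>C\<close> are made empty, so that \<open>card (interval a b)\<close>
  is an honest termination measure for the recursion defining the Moebius function.\<close>
definition interval :: "'x \<Rightarrow> 'x \<Rightarrow> 'x set" where
  "interval a b = (if a \<in> C \<and> b \<in> C then {z\<in>C. le a z \<and> le z b} else {})"

lemma card_interval_less:
  assumes "a \<in> C" "b \<in> C" "z \<in> C" "le a z" "le z b" "z \<noteq> b"
  shows "card (interval a z) < card (interval a b)"
proof (rule psubset_card_mono)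
  show "finite (interval a b)"
    using finite_interval by (simp add: interval_def)
  have "interval a z \<subseteq> interval a b"
    using assms transitive[of _ z b] by (auto simp: interval_def)
  moreover have "b \<notin> interval a z"
    using assms antisymmetric[of z b] by (auto simp: interval_def)
  moreover have "b \<in> interval a b"
    using assms reflexive[of b] transitive[of a z b] by (simp add: interval_def)
  ultimately show "interval a z \<subset> interval a b"
    by blast
qed

definition mobius_recursion :: "('x \<Rightarrow> 'x \<Rightarrow> 'k::ring_1) \<Rightarrow> bool" where
  "mobius_recursion f \<longleftrightarrow> (\<forall>a b. f a b =
      (if a \<in> C \<and> b \<in> C \<and> le a b then
         (if a = b then 1 else - (\<Sum>z\<in>{z\<in>C. le a z \<and> le z b \<and> z \<noteq> b}. f a z))
       else 0))"

lemma mobius_eq_The: "mobius le C = (THE f. mobius_recursion f)"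
  unfolding mobius_def mobius_recursion_def ..

fun mobius_approx :: "nat \<Rightarrow> 'x \<Rightarrow> 'x \<Rightarrow> 'k::ring_1" where
  "mobius_approx 0 a b = 0"
| "mobius_approx (Suc n) a b =
     (if a \<in> C \<and> b \<in> C \<and> le a b then
        (if a = b then 1 else - (\<Sum>z\<in>{z\<in>C. le a z \<and> le z b \<and> z \<noteq> b}. mobius_approx n a z))
      else 0)"

lemma mobius_approx_stable:
  "card (interval a b) < n \<Longrightarrow> card (interval a b) < m \<Longrightarrow>
    (mobius_approx n a b :: 'k::ring_1) = mobius_approx m a b"
proof (induction n arbitrary: m b)
  case (Suc n)
  then obtain m' where m: "m = Suc m'"
    by (cases m) auto
  have "(mobius_approx n a z :: 'k) = mobius_approx m' a z"
    if "a \<in> C" "b \<in> C" "z \<in> {z\<in>C. le a z \<and> le z b \<and> z \<noteq> b}" for z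
    using that card_interval_less[of a b z] Suc.prems by (intro Suc.IH) (auto simp: m)
  then show ?case
    unfolding m mobius_approx.simps by (auto intro: sum.cong)
qed simp

lemma mobius_recursion_approx:
  "mobius_recursion (\<lambda>a b. mobius_approx (Suc (card (interval a b))) a b :: 'k::ring_1)"
  unfolding mobius_recursion_def
proof (intro allI)
  fix a b
  let ?S = "{z\<in>C. le a z \<and> le z b \<and> z \<noteq> b}"
  show "mobius_approx (Suc (card (interval a b))) a b =
      (if a \<in> C \<and> b \<in> C \<and> le a b then
         (if a = b then 1 else - (\<Sum>z\<in>?S. mobius_approx (Suc (card (interval a z))) a z))
       else (0::'k))"
  proof (cases "a \<in> C \<and> b \<in> C \<and> le a b \<and> a \<noteq> b")
    case True
    have "(\<Sum>z\<in>?S. mobius_approx (card (interval a b)) a z) =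
        (\<Sum>z\<in>?S. mobius_approx (Suc (card (interval a z))) a z :: 'k)"
      using True card_interval_less[of a b] by (intro sum.cong refl mobius_approx_stable) auto
    then show ?thesis
      using True by simp
  qed auto
qed

lemma mobius_recursion_unique:
  assumes "mobius_recursion f" "mobius_recursion h"
  shows "f = h"
proof (intro ext)
  fix a b
  show "f a b = h a b"
  proof (induction "card (interval a b)" arbitrary: b rule: less_induct)
    case less
    have "f a z = h a z" if "a \<in> C" "b \<in> C" "z \<in> {z\<in>C. le a z \<and> le z b \<and> z \<noteq> b}" for z
      using that card_interval_less[of a b z] less by auto
    then show ?case
      using assms unfolding mobius_recursion_def by (auto intro: sum.cong)
  qed
qed

lemma mobius_recursion_mobius: "mobius_recursion (mobius le C :: 'x \<Rightarrow> 'x \<Rightarrow> 'k::ring_1)"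
  unfolding mobius_eq_The
  by (rule theI[where P = mobius_recursion, OF mobius_recursion_approx
        mobius_recursion_unique[OF _ mobius_recursion_approx]])

lemma mobius_refl: "a \<in> C \<Longrightarrow> (mobius le C a a :: 'k::ring_1) = 1"
  using mobius_recursion_mobius[unfolded mobius_recursion_def, rule_format, of a a] reflexive
  by simp

lemma sum_mobius_interval:
  assumes "a \<in> C" "b \<in> C"
  shows "(\<Sum>z\<in>{z\<in>C. le a z \<and> le z b}. mobius le C a z) = (if a = b then 1 else (0::'k::ring_1))"
proof (cases "le a b \<and> a \<noteq> b")
  case True
  have "b \<in> {z\<in>C. le a z \<and> le z b}"
    using assms True reflexive by simp
  then have "(\<Sum>z\<in>{z\<in>C. le a z \<and> le z b}. mobius le C a z) =
      mobius le C a b + (\<Sum>z\<in>{z\<in>C. le a z \<and> le z b \<and> z \<noteq> b}. mobius le C a z)"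
    using finite_interval[OF assms] by (subst sum.remove) (auto intro: sum.cong)
  also have "\<dots> = (0::'k)"
    using mobius_recursion_mobius[where 'k = 'k, unfolded mobius_recursion_def, rule_format, of a b]
      assms True by simp
  finally show ?thesis
    using True by simp
next
  case False
  have "{z\<in>C. le a z \<and> le z b} = (if a = b then {a} else {})"
  proof (cases "a = b")
    case True
    then show ?thesis
      using assms reflexive[of a] antisymmetric[of a] by auto
  next
    case False
    then show ?thesis
      using \<open>\<not> (le a b \<and> a \<noteq> b)\<close> assms transitive[of a _ b] by auto
  qed
  then show ?thesis
    using mobius_refl[OF assms(1)] by auto
qed

end

interpretation fun_module: module "fscale :: 'k::comm_ring_1 \<Rightarrow> ('x \<Rightarrow> 'k) \<Rightarrow> 'x \<Rightarrow> 'k"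
  by standard (auto simp: fscale_def algebra_simps)

lemma fscale_apply [simp]: "fscale c p y = c * p y"
  by (simp add: fscale_def)

lemma sum_fun_apply: "(\<Sum>i\<in>t. f i) x = (\<Sum>i\<in>t. f i x)"
  by (induction t rule: infinite_finite_induct) auto

definition coeff_sum :: "('x \<Rightarrow> bool) \<Rightarrow> ('x \<Rightarrow> 'k::comm_monoid_add) \<Rightarrow> 'k" where
  "coeff_sum P p = (\<Sum>y\<in>{y. p y \<noteq> 0 \<and> P y}. p y)"

lemma coeff_sum_zero [simp]: "coeff_sum P (\<lambda>_. 0) = 0"
  by (simp add: coeff_sum_def)

lemma coeff_sum_cong:
  assumes "\<And>y. p y \<noteq> 0 \<Longrightarrow> P y = Q y"
  shows "coeff_sum P p = coeff_sum Q p"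
proof -
  have "{y. p y \<noteq> 0 \<and> P y} = {y. p y \<noteq> 0 \<and> Q y}"
    using assms by blast
  then show ?thesis
    by (simp add: coeff_sum_def)
qed

lemma coeff_sum_superset:
  assumes "finite A" "{y. p y \<noteq> 0} \<subseteq> A"
  shows "coeff_sum P p = (\<Sum>y\<in>{y\<in>A. P y}. p y)"
  unfolding coeff_sum_def using assms by (intro sum.mono_neutral_left) auto

lemma support_lincomb:
  "{y. (\<Sum>i\<in>t. fscale (c i) (f i)) y \<noteq> 0} \<subseteq> (\<Union>i\<in>t. {y. f i y \<noteq> (0::'k::comm_ring_1)})"
proof
  fix y
  assume "y \<in> {y. (\<Sum>i\<in>t. fscale (c i) (f i)) y \<noteq> 0}"
  then have "(\<Sum>i\<in>t. c i * f i y) \<noteq> 0"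
    by (simp add: sum_fun_apply)
  then obtain i where "i \<in> t" "c i * f i y \<noteq> 0"
    by (meson sum.neutral)
  then show "y \<in> (\<Union>i\<in>t. {y. f i y \<noteq> 0})"
    by (auto intro: bexI[of _ i])
qed

lemma coeff_sum_lincomb:
  fixes f :: "'i \<Rightarrow> 'x \<Rightarrow> 'k::comm_ring_1"
  assumes "finite t" "\<And>i. i \<in> t \<Longrightarrow> finite {y. f i y \<noteq> 0}"
  shows "coeff_sum P (\<Sum>i\<in>t. fscale (c i) (f i)) = (\<Sum>i\<in>t. c i * coeff_sum P (f i))"
proof -
  define A where "A = (\<Union>i\<in>t. {y. f i y \<noteq> 0})"
  have A: "finite A"
    using assms by (simp add: A_def)
  have "{y. (\<Sum>i\<in>t. fscale (c i) (f i)) y \<noteq> 0} \<subseteq> A"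
    unfolding A_def by (rule support_lincomb)
  then have "coeff_sum P (\<Sum>i\<in>t. fscale (c i) (f i)) =
      (\<Sum>y\<in>{y\<in>A. P y}. (\<Sum>i\<in>t. fscale (c i) (f i)) y)"
    by (rule coeff_sum_superset[OF A])
  also have "\<dots> = (\<Sum>y\<in>{y\<in>A. P y}. \<Sum>i\<in>t. c i * f i y)"
    by (simp add: sum_fun_apply)
  also have "\<dots> = (\<Sum>i\<in>t. c i * (\<Sum>y\<in>{y\<in>A. P y}. f i y))"
    by (subst sum.swap) (simp add: sum_distrib_left)
  also have "\<dots> = (\<Sum>i\<in>t. c i * coeff_sum P (f i))"
  proof (intro sum.cong refl arg_cong[where f = "(*) _"])
    fix i
    assume "i \<in> t"
    then have "{y. f i y \<noteq> 0} \<subseteq> A"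
      by (auto simp: A_def)
    from coeff_sum_superset[OF A this] show "(\<Sum>y\<in>{y\<in>A. P y}. f i y) = coeff_sum P (f i)"
      by simp
  qed
  finally show ?thesis .
qed

lemma finitely_supported_eq_sum_unit_vectors:
  assumes "finite {y. p y \<noteq> 0}"
  shows "p = (\<Sum>y\<in>{y. p y \<noteq> 0}. fscale (p y) (\<lambda>z. if z = y then 1 else (0::'k::comm_ring_1)))"
proof
  fix z
  have "(\<Sum>y\<in>{y. p y \<noteq> 0}. fscale (p y) (\<lambda>z. if z = y then 1 else 0)) z =
      (\<Sum>y\<in>{y. p y \<noteq> 0}. if z = y then p y else 0)"
    unfolding sum_fun_apply by (intro sum.cong) auto
  also have "\<dots> = p z"
    using assms by (simp add: sum.delta)
  finally show "p z = (\<Sum>y\<in>{y. p y \<noteq> 0}. fscale (p y) (\<lambda>z. if z = y then 1 else 0)) z"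
    by simp
qed

lemma comul_lin_support:
  "{c. comul_lin comul S T p c \<noteq> 0} \<subseteq> comul S T ` {x. p x \<noteq> 0}"
proof
  fix c
  assume "c \<in> {c. comul_lin comul S T p c \<noteq> 0}"
  then have "{x. p x \<noteq> 0 \<and> comul S T x = c} \<noteq> {}"
    unfolding comul_lin_def by force
  then obtain x where "p x \<noteq> 0" "comul S T x = c"
    by blast
  then show "c \<in> comul S T ` {x. p x \<noteq> 0}"
    by blast
qed

lemma coeff_sum_comul_lin:
  assumes "finite {x. p x \<noteq> 0}"
  shows "coeff_sum R (comul_lin comul S T p) = coeff_sum (\<lambda>x. R (comul S T x)) p"
proof -
  define P where "P = {x. p x \<noteq> 0}"
  have P: "finite P"
    using assms by (simp add: P_def)
  have "{c. comul_lin comul S T p c \<noteq> 0} \<subseteq> comul S T ` P"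
    unfolding P_def by (rule comul_lin_support)
  then have "coeff_sum R (comul_lin comul S T p) =
      (\<Sum>c\<in>{c\<in>comul S T ` P. R c}. comul_lin comul S T p c)"
    using P by (intro coeff_sum_superset) auto
  also have "\<dots> =
      (\<Sum>c\<in>{c\<in>comul S T ` P. R c}. \<Sum>x\<in>{x\<in>{x\<in>P. R (comul S T x)}. comul S T x = c}. p x)"
    unfolding comul_lin_def P_def by (intro sum.cong refl arg_cong[where f = "sum p"]) auto
  also have "\<dots> = (\<Sum>x\<in>{x\<in>P. R (comul S T x)}. p x)"
    using P by (intro sum.group) auto
  also have "\<dots> = coeff_sum (\<lambda>x. R (comul S T x)) p"
    by (simp add: coeff_sum_def P_def)
  finally show ?thesis .
qed

lemma finite_has_minimal_rel:
  assumes "finite A" "a \<in> A"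
    and antisym: "\<And>x y. x \<in> A \<Longrightarrow> y \<in> A \<Longrightarrow> R x y \<Longrightarrow> R y x \<Longrightarrow> x = y"
    and trans: "\<And>x y z. x \<in> A \<Longrightarrow> y \<in> A \<Longrightarrow> z \<in> A \<Longrightarrow> R x y \<Longrightarrow> R y z \<Longrightarrow> R x z"
  obtains m where "m \<in> A" "\<And>c. c \<in> A \<Longrightarrow> R c m \<Longrightarrow> c = m"
proof -
  define r where "r = {(x, y). x \<in> A \<and> y \<in> A \<and> R x y \<and> x \<noteq> y}"
  have "trans r"
  proof (rule transI)
    fix x y z
    assume "(x, y) \<in> r" "(y, z) \<in> r"
    then show "(x, z) \<in> r"
      using antisym[of x y] trans[of x y z] by (auto simp: r_def)
  qed
  moreover have "irrefl r"
    by (simp add: r_def irrefl_def)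
  ultimately have "acyclic r"
    by (simp add: acyclic_irrefl)
  moreover have "finite r"
    using \<open>finite A\<close> by (intro finite_subset[of r "A \<times> A"]) (auto simp: r_def)
  ultimately have "wf r"
    by (rule finite_acyclic_wf[rotated])
  then obtain m where m: "m \<in> A" and min: "\<And>c. (c, m) \<in> r \<Longrightarrow> c \<notin> A"
    using wfE_min[OF \<open>wf r\<close> \<open>a \<in> A\<close>] by blast
  show thesis
  proof (rule that[OF m])
    fix c
    assume "c \<in> A" "R c m"
    show "c = m"
    proof (rule ccontr)
      assume "c \<noteq> m"
      then have "(c, m) \<in> r"
        using \<open>c \<in> A\<close> \<open>R c m\<close> m by (simp add: r_def)
      then show False
        using min \<open>c \<in> A\<close> by blast
    qed
  qed
qed

text \<open>Triangularity: the functionals \<open>p \<mapsto> \<Sum>\<^sub>c\<^sub>\<le>\<^sub>v p c\<close> detect a finitely supported \<open>p\<close>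
  at a minimal point of its support.\<close>
lemma coeff_sums_below_vanish_imp_zero:
  assumes supp: "finite {c. q c \<noteq> 0}" "{c. q c \<noteq> 0} \<subseteq> A"
    and refl: "\<And>x. x \<in> A \<Longrightarrow> R x x"
    and antisym: "\<And>x y. x \<in> A \<Longrightarrow> y \<in> A \<Longrightarrow> R x y \<Longrightarrow> R y x \<Longrightarrow> x = y"
    and trans: "\<And>x y z. x \<in> A \<Longrightarrow> y \<in> A \<Longrightarrow> z \<in> A \<Longrightarrow> R x y \<Longrightarrow> R y z \<Longrightarrow> R x z"
    and vanish: "\<And>v. v \<in> A \<Longrightarrow> coeff_sum (\<lambda>c. R c v) q = 0"
  shows "q = (\<lambda>_. 0)"
proof (rule ccontr)
  assume "q \<noteq> (\<lambda>_. 0)"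
  then obtain a where a: "a \<in> {c. q c \<noteq> 0}"
    by auto
  obtain m where m: "m \<in> {c. q c \<noteq> 0}"
    and min: "\<And>c. c \<in> {c. q c \<noteq> 0} \<Longrightarrow> R c m \<Longrightarrow> c = m"
  proof (rule finite_has_minimal_rel[OF supp(1) a])
    show "x = y" if "x \<in> {c. q c \<noteq> 0}" "y \<in> {c. q c \<noteq> 0}" "R x y" "R y x" for x y
      using that supp(2) by (intro antisym) auto
    show "R x z" if "x \<in> {c. q c \<noteq> 0}" "y \<in> {c. q c \<noteq> 0}" "z \<in> {c. q c \<noteq> 0}" "R x y" "R y z"
      for x y z
      using that supp(2) by (intro trans[of x y z]) auto
  qed (rule that)
  have "m \<in> A"
    using m supp(2) by blast
  then have "{c. q c \<noteq> 0 \<and> R c m} = {m}"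
    using m min refl by blast
  then have "coeff_sum (\<lambda>c. R c m) q = q m"
    by (simp add: coeff_sum_def)
  then show False
    using m vanish[OF \<open>m \<in> A\<close>] by simp
qed

locale upper_finite_poset = locally_finite_poset le C for le :: "'x \<Rightarrow> 'x \<Rightarrow> bool" and C +
  assumes finite_upset: "x \<in> C \<Longrightarrow> finite {y\<in>C. le x y}"
begin

definition inv_basis :: "'x \<Rightarrow> 'x \<Rightarrow> 'k::ring_1" where
  "inv_basis x = (\<lambda>y. if y \<in> C \<and> le x y then mobius le C x y else 0)"

lemma inv_basis_support: "{y. inv_basis x y \<noteq> 0} \<subseteq> {y\<in>C. le x y}"
  by (auto simp: inv_basis_def)

lemma finite_inv_basis_support: "x \<in> C \<Longrightarrow> finite {y. inv_basis x y \<noteq> 0}"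
  using finite_upset inv_basis_support by (rule finite_subset[rotated])

lemma coeff_sum_inv_basis:
  assumes "x \<in> C" "v \<in> C"
  shows "coeff_sum (\<lambda>y. le y v) (inv_basis x) = (if x = v then 1 else (0::'k::ring_1))"
proof -
  have "coeff_sum (\<lambda>y. le y v) (inv_basis x) = (\<Sum>y\<in>{y\<in>{y\<in>C. le x y}. le y v}. inv_basis x y :: 'k)"
    using finite_upset[OF assms(1)] inv_basis_support by (rule coeff_sum_superset)
  also have "\<dots> = (\<Sum>y\<in>{z\<in>C. le x z \<and> le z v}. mobius le C x y)"
    by (intro sum.cong) (auto simp: inv_basis_def)
  also have "\<dots> = (if x = v then 1 else 0)"
    using assms by (rule sum_mobius_interval)
  finally show ?thesis .
qed

lemma coeff_sum_lincomb_inv_basis: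
  fixes r :: "('x \<Rightarrow> 'k::comm_ring_1) \<Rightarrow> 'k"
  assumes "finite t" "t \<subseteq> inv_basis ` C" "w \<in> C"
  shows "coeff_sum (\<lambda>y. le y w) (\<Sum>a\<in>t. fscale (r a) a) =
    (if inv_basis w \<in> t then r (inv_basis w) else 0)"
proof -
  have dual: "coeff_sum (\<lambda>y. le y w) a = (if a = inv_basis w then 1 else 0)" if a: "a \<in> t" for a
  proof (cases "a = inv_basis w")
    case True
    then show ?thesis
      using coeff_sum_inv_basis[where 'k = 'k, OF assms(3) assms(3)] by simp
  next
    case False
    obtain x where x: "x \<in> C" "a = inv_basis x"
      using a assms(2) by blast
    with False have "x \<noteq> w"
      by blast
    then show ?thesis
      using coeff_sum_inv_basis[where 'k = 'k, OF x(1) assms(3)] x(2) False by simp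
  qed
  have "coeff_sum (\<lambda>y. le y w) (\<Sum>a\<in>t. fscale (r a) a) =
      (\<Sum>a\<in>t. r a * coeff_sum (\<lambda>y. le y w) a)"
    using assms finite_inv_basis_support by (intro coeff_sum_lincomb) auto
  also have "\<dots> = (\<Sum>a\<in>t. if a = inv_basis w then r a else 0)"
    using dual by (intro sum.cong) auto
  also have "\<dots> = (if inv_basis w \<in> t then r (inv_basis w) else 0)"
    using assms(1) by (simp add: sum.delta')
  finally show ?thesis .
qed

lemma independent_inv_basis: "fun_module.independent (inv_basis ` C :: ('x \<Rightarrow> 'k::comm_ring_1) set)"
  unfolding fun_module.independent_explicit_module
proof (intro allI impI)
  fix t and u :: "('x \<Rightarrow> 'k) \<Rightarrow> 'k" and a
  assume t: "finite t" "t \<subseteq> inv_basis ` C" "(\<Sum>a\<in>t. fscale (u a) a) = 0" and "a \<in> t"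
  then obtain w where "w \<in> C" "a = inv_basis w"
    by blast
  then have "coeff_sum (\<lambda>y. le y w) (\<Sum>a\<in>t. fscale (u a) a) = u a"
    using t coeff_sum_lincomb_inv_basis[of t w u] \<open>a \<in> t\<close> by simp
  then show "u a = 0"
    using t by (simp add: zero_fun_def)
qed

lemma unit_vector_eq_inv_basis_minus:
  assumes "y \<in> C"
  shows "(\<lambda>z. if z = y then 1 else 0) = inv_basis y -
    (\<Sum>w\<in>{z\<in>C. le y z} - {y}. fscale (mobius le C y w) (\<lambda>z. if z = w then 1 else (0::'k::ring_1)))"
proof
  fix z
  let ?U = "{z\<in>C. le y z}"
  have "(\<Sum>w\<in>?U - {y}. fscale (mobius le C y w) (\<lambda>z. if z = w then 1 else (0::'k))) z =
      (\<Sum>w\<in>?U - {y}. if z = w then mobius le C y w else 0)"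
    unfolding sum_fun_apply by (intro sum.cong) auto
  also have "\<dots> = (if z \<in> ?U - {y} then mobius le C y z else 0)"
    using finite_upset[OF assms] by (simp add: sum.delta)
  finally have "(\<Sum>w\<in>?U - {y}. fscale (mobius le C y w) (\<lambda>z. if z = w then 1 else (0::'k))) z =
      (if z \<in> ?U - {y} then mobius le C y z else 0)" .
  moreover have "inv_basis y z = (if z \<in> ?U then mobius le C y z else (0::'k))"
    by (simp add: inv_basis_def)
  ultimately show "(if z = y then 1 else 0 :: 'k) =
      (inv_basis y - (\<Sum>w\<in>?U - {y}. fscale (mobius le C y w) (\<lambda>z. if z = w then 1 else 0))) z"
    using assms reflexive[OF assms] mobius_refl[OF assms] by (cases "z = y") (simp_all add: fun_diff_def)
qed

lemma unit_vector_in_span_inv_basis: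
  assumes "y \<in> C"
  shows "(\<lambda>z. if z = y then 1 else 0) \<in> fun_module.span (inv_basis ` C :: ('x \<Rightarrow> 'k::comm_ring_1) set)"
  using assms
proof (induction "card {z\<in>C. le y z}" arbitrary: y rule: less_induct)
  case less
  define U where "U = {z\<in>C. le y z}"
  have U: "finite U" "y \<in> U"
    using finite_upset less.prems reflexive by (auto simp: U_def)
  have "(\<lambda>z. if z = w then 1 else 0) \<in> fun_module.span (inv_basis ` C :: ('x \<Rightarrow> 'k) set)"
    if "w \<in> U - {y}" for w
  proof (rule less.hyps)
    show "w \<in> C"
      using that by (simp add: U_def)
    have "{z\<in>C. le w z} \<subseteq> U"
      using that less.prems transitive[of y w] by (auto simp: U_def)
    moreover have "y \<notin> {z\<in>C. le w z}"
      using that less.prems antisymmetric[of y w] by (auto simp: U_def)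
    ultimately have "{z\<in>C. le w z} \<subset> U"
      using U by blast
    then show "card {z\<in>C. le w z} < card {z\<in>C. le y z}"
      using U by (simp add: psubset_card_mono U_def)
  qed
  then have "inv_basis y - (\<Sum>w\<in>U - {y}. fscale (mobius le C y w) (\<lambda>z. if z = w then 1 else 0))
      \<in> fun_module.span (inv_basis ` C :: ('x \<Rightarrow> 'k) set)"
    using less.prems
    by (intro fun_module.span_diff fun_module.span_sum fun_module.span_scale)
      (auto intro: fun_module.span_base)
  then show ?case
    unfolding U_def by (simp only: unit_vector_eq_inv_basis_minus[OF less.prems, symmetric])
qed

lemma span_inv_basis:
  assumes "finite {y. p y \<noteq> 0}" "{y. p y \<noteq> 0} \<subseteq> C"
  shows "p \<in> fun_module.span (inv_basis ` C :: ('x \<Rightarrow> 'k::comm_ring_1) set)"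
proof -
  have "(\<Sum>y\<in>{y. p y \<noteq> 0}. fscale (p y) (\<lambda>z. if z = y then 1 else 0))
      \<in> fun_module.span (inv_basis ` C)"
    using assms(2) unit_vector_in_span_inv_basis by (intro fun_module.span_sum fun_module.span_scale) auto
  then show ?thesis
    by (simp only: finitely_supported_eq_sum_unit_vectors[OF assms(1), symmetric])
qed

end

lemma lincomb_mem_kF:
  fixes f :: "'i \<Rightarrow> 'x \<Rightarrow> 'k::comm_ring_1"
  assumes "finite t" "\<And>i. i \<in> t \<Longrightarrow> f i \<in> kF Fc I"
  shows "(\<Sum>i\<in>t. fscale (c i) (f i)) \<in> kF Fc I"
proof -
  have "(\<Union>i\<in>t. {y. f i y \<noteq> 0}) \<subseteq> Fc I" "finite (\<Union>i\<in>t. {y. f i y \<noteq> 0})"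
    using assms by (auto simp: kF_def)
  then show ?thesis
    using support_lincomb[of c f t] by (auto simp: kF_def intro: finite_subset)
qed

locale adjoint_species =
  fixes Fc :: "'l set \<Rightarrow> 'x set"
    and Fle :: "'l set \<Rightarrow> 'x \<Rightarrow> 'x \<Rightarrow> bool"
    and Fact :: "('l \<Rightarrow> 'l) \<Rightarrow> 'l set \<Rightarrow> 'x \<Rightarrow> 'x"
    and e :: 'x
    and mul :: "'l set \<Rightarrow> 'l set \<Rightarrow> 'x \<Rightarrow> 'x \<Rightarrow> 'x"
    and comul :: "'l set \<Rightarrow> 'l set \<Rightarrow> 'x \<Rightarrow> 'x \<times> 'x"
  assumes comonoid: "poset_comonoid Fc Fle Fact e comul"
    and monoid: "poset_monoid Fc Fle Fact e mul"
    and adjoint: "adjoint_pair Fc Fle comul mul"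
begin

lemma locally_finite_poset_Fc:
  assumes "finite J"
  shows "locally_finite_poset (Fle J) (Fc J)"
proof -
  have "poset_species Fc Fle Fact e"
    using monoid by (simp add: poset_monoid_def)
  from this[unfolded poset_species_def, THEN conjunct1, rule_format, OF assms] show ?thesis
    by unfold_locales blast+
qed

lemma mul_mem:
  assumes "finite S" "finite T" "S \<inter> T = {}" "y \<in> Fc S" "z \<in> Fc T"
  shows "mul S T y z \<in> Fc (S \<union> T)"
  using monoid[unfolded poset_monoid_def, THEN conjunct2, THEN conjunct1, rule_format, OF assms(1-3)] assms(4,5)
  by simp

lemma comul_mem:
  assumes "finite S" "finite T" "S \<inter> T = {}" "x \<in> Fc (S \<union> T)"
  shows "comul S T x \<in> Fc S \<times> Fc T"
  using comonoid[unfolded poset_comonoid_def, THEN conjunct2, THEN conjunct1, rule_format, OF assms(1-3)] assms(4)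
  by (simp add: mem_Times_iff)

lemma comul_le_iff_le_mul:
  assumes "finite S" "finite T" "S \<inter> T = {}" "x \<in> Fc (S \<union> T)" "y \<in> Fc S" "z \<in> Fc T"
  shows "Fle S (fst (comul S T x)) y \<and> Fle T (snd (comul S T x)) z \<longleftrightarrow> Fle (S \<union> T) x (mul S T y z)"
  using adjoint[unfolded adjoint_pair_def, rule_format, OF assms] .

lemma coeff_sum_comul_lin_below:
  assumes "finite S" "finite T" "S \<inter> T = {}"
    and "finite {x. p x \<noteq> 0}" "{x. p x \<noteq> 0} \<subseteq> Fc (S \<union> T)"
    and "a \<in> Fc S" "b \<in> Fc T"
  shows "coeff_sum (\<lambda>c. Fle S (fst c) a \<and> Fle T (snd c) b) (comul_lin comul S T p) =
    coeff_sum (\<lambda>x. Fle (S \<union> T) x (mul S T a b)) p"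
  unfolding coeff_sum_comul_lin[OF assms(4)]
  using assms by (intro coeff_sum_cong comul_le_iff_le_mul) auto

text \<open>Adjointness turns the coefficient sums of \<open>\<Delta>\<^sub>S\<^sub>,\<^sub>T p\<close> below \<open>(a, b)\<close> into the coefficient
  sums of \<open>p\<close> below \<open>a \<box> b\<close>; the former determine \<open>\<Delta>\<^sub>S\<^sub>,\<^sub>T p\<close> by triangularity.\<close>
lemma comul_lin_eq_zero_iff:
  assumes ST: "finite S" "finite T" "S \<inter> T = {}"
    and supp: "finite {x. p x \<noteq> 0}" "{x. p x \<noteq> 0} \<subseteq> Fc (S \<union> T)"
  shows "comul_lin comul S T p = (\<lambda>_. 0) \<longleftrightarrow>
    (\<forall>a\<in>Fc S. \<forall>b\<in>Fc T. coeff_sum (\<lambda>x. Fle (S \<union> T) x (mul S T a b)) p = 0)"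
proof
  assume "comul_lin comul S T p = (\<lambda>_. 0)"
  then show "\<forall>a\<in>Fc S. \<forall>b\<in>Fc T. coeff_sum (\<lambda>x. Fle (S \<union> T) x (mul S T a b)) p = 0"
    using coeff_sum_comul_lin_below[OF assms] by simp
next
  assume vanish: "\<forall>a\<in>Fc S. \<forall>b\<in>Fc T. coeff_sum (\<lambda>x. Fle (S \<union> T) x (mul S T a b)) p = 0"
  interpret PS: locally_finite_poset "Fle S" "Fc S"
    using ST(1) by (rule locally_finite_poset_Fc)
  interpret PT: locally_finite_poset "Fle T" "Fc T"
    using ST(2) by (rule locally_finite_poset_Fc)
  show "comul_lin comul S T p = (\<lambda>_. 0)"
  proof (rule coeff_sums_below_vanish_imp_zero[where A = "Fc S \<times> Fc T"
        and R = "\<lambda>c d. Fle S (fst c) (fst d) \<and> Fle T (snd c) (snd d)"])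
    have "{c. comul_lin comul S T p c \<noteq> 0} \<subseteq> comul S T ` {x. p x \<noteq> 0}"
      by (rule comul_lin_support)
    moreover have "comul S T ` {x. p x \<noteq> 0} \<subseteq> Fc S \<times> Fc T"
      using supp(2) comul_mem[OF ST] by blast
    ultimately show "finite {c. comul_lin comul S T p c \<noteq> 0}"
      "{c. comul_lin comul S T p c \<noteq> 0} \<subseteq> Fc S \<times> Fc T"
      using supp(1) by (auto intro: finite_subset)
    show "Fle S (fst x) (fst x) \<and> Fle T (snd x) (snd x)" if "x \<in> Fc S \<times> Fc T" for x
      using that PS.reflexive PT.reflexive by (simp add: mem_Times_iff)
    show "x = y" if "x \<in> Fc S \<times> Fc T" "y \<in> Fc S \<times> Fc T"
      "Fle S (fst x) (fst y) \<and> Fle T (snd x) (snd y)"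
      "Fle S (fst y) (fst x) \<and> Fle T (snd y) (snd x)" for x y
      using that PS.antisymmetric[of "fst x" "fst y"] PT.antisymmetric[of "snd x" "snd y"]
      by (simp add: mem_Times_iff prod_eq_iff)
    show "Fle S (fst x) (fst z) \<and> Fle T (snd x) (snd z)" if "x \<in> Fc S \<times> Fc T" "y \<in> Fc S \<times> Fc T"
      "z \<in> Fc S \<times> Fc T" "Fle S (fst x) (fst y) \<and> Fle T (snd x) (snd y)"
      "Fle S (fst y) (fst z) \<and> Fle T (snd y) (snd z)" for x y z
      using that PS.transitive[of "fst x" "fst y" "fst z"] PT.transitive[of "snd x" "snd y" "snd z"]
      by (simp add: mem_Times_iff)
    show "coeff_sum (\<lambda>c. Fle S (fst c) (fst v) \<and> Fle T (snd c) (snd v)) (comul_lin comul S T p) = 0"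
      if "v \<in> Fc S \<times> Fc T" for v
      using that vanish coeff_sum_comul_lin_below[OF assms, of "fst v" "snd v"] by (simp add: mem_Times_iff)
  qed
qed

lemma primitive_iff_coeff_sums_below_products:
  assumes "finite I"
  shows "primitive Fc comul I p \<longleftrightarrow> p \<in> kF Fc I \<and>
    (\<forall>S T. S \<noteq> {} \<longrightarrow> T \<noteq> {} \<longrightarrow> S \<inter> T = {} \<longrightarrow> S \<union> T = I \<longrightarrow>
      (\<forall>a\<in>Fc S. \<forall>b\<in>Fc T. coeff_sum (\<lambda>y. Fle I y (mul S T a b)) p = 0))"
proof (cases "p \<in> kF Fc I")
  case True
  then have supp: "finite {x. p x \<noteq> 0}" "{x. p x \<noteq> 0} \<subseteq> Fc I"
    by (auto simp: kF_def)
  have "comul_lin comul S T p = (\<lambda>_. 0) \<longleftrightarrow>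
      (\<forall>a\<in>Fc S. \<forall>b\<in>Fc T. coeff_sum (\<lambda>y. Fle I y (mul S T a b)) p = 0)"
    if "S \<inter> T = {}" "S \<union> T = I" for S T
  proof -
    have "finite S" "finite T"
      using that assms by auto
    then show ?thesis
      using comul_lin_eq_zero_iff[OF _ _ that(1) supp[unfolded that(2)[symmetric]]] that(2) by simp
  qed
  then show ?thesis
    using True by (simp add: primitive_def)
qed (simp add: primitive_def)

lemma ball_decomposable_iff:
  assumes "finite I"
  shows "(\<forall>v\<in>Fc I. \<not> box_indecomposable Fc mul I v \<longrightarrow> Q v) \<longleftrightarrow>
    (\<forall>S T. S \<noteq> {} \<longrightarrow> T \<noteq> {} \<longrightarrow> S \<inter> T = {} \<longrightarrow> S \<union> T = I \<longrightarrow>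
      (\<forall>a\<in>Fc S. \<forall>b\<in>Fc T. Q (mul S T a b)))"
  (is "?lhs \<longleftrightarrow> ?rhs")
proof
  assume ?lhs
  show ?rhs
  proof (intro allI impI ballI)
    fix S T a b
    assume ST: "S \<noteq> {}" "T \<noteq> {}" "S \<inter> T = {}" "S \<union> T = I" and ab: "a \<in> Fc S" "b \<in> Fc T"
    have "mul S T a b \<in> Fc I"
      using ST ab assms mul_mem[of S T a b] by auto
    moreover have "\<not> box_indecomposable Fc mul I (mul S T a b)"
      unfolding box_indecomposable_def using ST ab by blast
    ultimately show "Q (mul S T a b)"
      using \<open>?lhs\<close> by blast
  qed
next
  assume ?rhs
  show ?lhs
  proof (intro ballI impI)
    fix v
    assume "\<not> box_indecomposable Fc mul I v"
    then obtain S T a b where "S \<noteq> {}" "T \<noteq> {}" "S \<inter> T = {}" "S \<union> T = I"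
      and "a \<in> Fc S" "b \<in> Fc T" "v = mul S T a b"
      unfolding box_indecomposable_def by blast
    then show "Q v"
      using \<open>?rhs\<close> by blast
  qed
qed

lemma primitive_iff_coeff_sums_vanish:
  assumes "finite I"
  shows "primitive Fc comul I p \<longleftrightarrow> p \<in> kF Fc I \<and>
    (\<forall>v\<in>Fc I. \<not> box_indecomposable Fc mul I v \<longrightarrow> coeff_sum (\<lambda>y. Fle I y v) p = 0)"
  using primitive_iff_coeff_sums_below_products[OF assms] ball_decomposable_iff[OF assms] by simp

end

locale adjoint_species_upper_finite = adjoint_species Fc Fle Fact e mul comul
  for Fc :: "'l set \<Rightarrow> 'x set" and Fle Fact e mul comul +
  fixes I :: "'l set"
  assumes finite_I: "finite I"
    and finite_upsets: "\<forall>x\<in>Fc I. finite {y\<in>Fc I. Fle I x y}"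
begin

sublocale poset: upper_finite_poset "Fle I" "Fc I"
  using locally_finite_poset_Fc[OF finite_I] finite_upsets
  by (simp add: upper_finite_poset_def upper_finite_poset_axioms_def)

lemma omega_eq_inv_basis: "omega Fc Fle I x = poset.inv_basis x"
  unfolding omega_def poset.inv_basis_def ..

lemma omega_mem_kF: "x \<in> Fc I \<Longrightarrow> (omega Fc Fle I x :: 'x \<Rightarrow> 'k::ring_1) \<in> kF Fc I"
  using poset.finite_inv_basis_support poset.inv_basis_support
  by (auto simp: kF_def omega_eq_inv_basis)

lemma primitive_omega_iff_indecomposable:
  assumes "x \<in> Fc I"
  shows "primitive Fc comul I (omega Fc Fle I x :: 'x \<Rightarrow> 'k::comm_ring_1) \<longleftrightarrow>
    box_indecomposable Fc mul I x"
  using assms omega_mem_kF[OF assms] poset.coeff_sum_inv_basis[where 'k = 'k, OF assms]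
  by (auto simp: primitive_iff_coeff_sums_vanish[OF finite_I] omega_eq_inv_basis)

lemma inj_on_omega: "inj_on (omega Fc Fle I :: 'x \<Rightarrow> 'x \<Rightarrow> 'k::comm_ring_1) (Fc I)"
proof (rule inj_onI)
  fix x y
  assume "x \<in> Fc I" "y \<in> Fc I" "(omega Fc Fle I x :: 'x \<Rightarrow> 'k) = omega Fc Fle I y"
  then show "x = y"
    using poset.coeff_sum_inv_basis[where 'k = 'k, of x y] poset.coeff_sum_inv_basis[where 'k = 'k, of y y]
    by (auto simp: omega_eq_inv_basis split: if_splits)
qed

lemma independent_omega_indecomposable:
  "fun_module.independent
    ((\<lambda>x. omega Fc Fle I x :: 'x \<Rightarrow> 'k::comm_ring_1) ` {x\<in>Fc I. box_indecomposable Fc mul I x})"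
  by (rule fun_module.independent_mono[OF poset.independent_inv_basis]) (auto simp: omega_eq_inv_basis)

lemma span_omega_indecomposable:
  "fun_module.span
    ((\<lambda>x. omega Fc Fle I x :: 'x \<Rightarrow> 'k::comm_ring_1) ` {x\<in>Fc I. box_indecomposable Fc mul I x}) =
    {p. primitive Fc comul I p}"
  (is "fun_module.span ?B = _")
proof (intro equalityI subsetI; simp)
  fix p :: "'x \<Rightarrow> 'k"
  assume "p \<in> fun_module.span ?B"
  then obtain t r where t: "finite t" "t \<subseteq> ?B" and p: "p = (\<Sum>a\<in>t. fscale (r a) a)"
    unfolding fun_module.span_explicit by blast
  have tC: "t \<subseteq> poset.inv_basis ` Fc I"
    using t(2) by (auto simp: omega_eq_inv_basis)
  have "p \<in> kF Fc I"
    unfolding p using t omega_mem_kF by (intro lincomb_mem_kF) auto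
  moreover have "coeff_sum (\<lambda>y. Fle I y v) p = 0"
    if "v \<in> Fc I" "\<not> box_indecomposable Fc mul I v" for v
  proof -
    have "omega Fc Fle I v \<notin> ?B"
      using that inj_on_image_mem_iff[OF inj_on_omega, of v] by auto
    then show ?thesis
      unfolding p using poset.coeff_sum_lincomb_inv_basis[OF t(1) tC that(1)] t(2)
      by (auto simp: omega_eq_inv_basis)
  qed
  ultimately show "primitive Fc comul I p"
    by (simp add: primitive_iff_coeff_sums_vanish[OF finite_I])
next
  fix p :: "'x \<Rightarrow> 'k"
  assume "primitive Fc comul I p"
  then have p: "p \<in> kF Fc I"
    and vanish: "\<And>v. v \<in> Fc I \<Longrightarrow> \<not> box_indecomposable Fc mul I v \<Longrightarrow> coeff_sum (\<lambda>y. Fle I y v) p = 0"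
    by (auto simp: primitive_iff_coeff_sums_vanish[OF finite_I])
  then have "p \<in> fun_module.span (poset.inv_basis ` Fc I)"
    by (intro poset.span_inv_basis) (auto simp: kF_def)
  then obtain t r where t: "finite t" "t \<subseteq> poset.inv_basis ` Fc I"
    and p_eq: "p = (\<Sum>a\<in>t. fscale (r a) a)"
    unfolding fun_module.span_explicit by blast
  have "r a = 0" if a: "a \<in> t - ?B" for a
  proof -
    obtain w where w: "w \<in> Fc I" "a = poset.inv_basis w"
      using a t(2) by blast
    then have "\<not> box_indecomposable Fc mul I w"
      using a by (auto simp: omega_eq_inv_basis)
    then show "r a = 0"
      using vanish[OF w(1)] poset.coeff_sum_lincomb_inv_basis[OF t w(1), of r] a w(2) p_eq by simp
  qed
  then have "p = (\<Sum>a\<in>t \<inter> ?B. fscale (r a) a)"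
    unfolding p_eq using t(1) by (intro sum.mono_neutral_right) (auto simp: zero_fun_def)
  also have "\<dots> \<in> fun_module.span ?B"
    by (intro fun_module.span_sum fun_module.span_scale fun_module.span_base) blast
  finally show "p \<in> fun_module.span ?B" .
qed

end

theorem mainTheorem4:
  fixes Fc :: "'l set \<Rightarrow> 'x set"
    and Fle :: "'l set \<Rightarrow> 'x \<Rightarrow> 'x \<Rightarrow> bool"
    and Fact :: "('l \<Rightarrow> 'l) \<Rightarrow> 'l set \<Rightarrow> 'x \<Rightarrow> 'x"
    and e :: 'x
    and mul :: "'l set \<Rightarrow> 'l set \<Rightarrow> 'x \<Rightarrow> 'x \<Rightarrow> 'x"
    and comul :: "'l set \<Rightarrow> 'l set \<Rightarrow> 'x \<Rightarrow> 'x \<times> 'x"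
    and I :: "'l set"
  assumes "poset_comonoid Fc Fle Fact e comul"
    and "poset_monoid Fc Fle Fact e mul"
    and "adjoint_pair Fc Fle comul mul"
    and "finite I"
    and "\<forall>x\<in>Fc I. finite {y\<in>Fc I. Fle I x y}"
  shows "(\<forall>x\<in>Fc I. primitive Fc comul I (omega Fc Fle I x :: 'x \<Rightarrow> 'k::field_char_0)
                     \<longleftrightarrow> box_indecomposable Fc mul I x)
       \<and> Modules.module.independent fscale
             ((\<lambda>x. omega Fc Fle I x :: 'x \<Rightarrow> 'k) ` {x\<in>Fc I. box_indecomposable Fc mul I x})
       \<and> Modules.module.span fscale
             ((\<lambda>x. omega Fc Fle I x :: 'x \<Rightarrow> 'k) ` {x\<in>Fc I. box_indecomposable Fc mul I x})
           = {p :: 'x \<Rightarrow> 'k. primitive Fc comul I p}"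
proof -
  interpret adjoint_species_upper_finite Fc Fle Fact e mul comul I
    by unfold_locales (fact assms)+
  show ?thesis
    using primitive_omega_iff_indecomposable independent_omega_indecomposable
      span_omega_indecomposable
    by blast
qed

end
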